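(* Let $a<b$ be real numbers, let $t_1,\ldots,t_n$ be numbers and put $s_k:=t_1^k+\cdots+t_n^k$ for $k\ge 0$ (so $s_0=n$). (i) If $t_1,\ldots,t_n$ are real numbers lying in $[a,b]$, then for every natural number $m\ge 1$ the matrix $H_m(s_0,s_1,\ldots,s_{2m-1},[a,b])$ is positive semidefinite. (ii) Conversely, suppose $t_1,\ldots,t_n$ are complex numbers such that all power sums $s_k$ are real, and let $m\ge \operatorname{rank}(R_n)$, where $R_n=(s_{i+j-2})_{i,j=1}^n$ (this rank equals the number of distinct values among the $t_i$). If $H_m(s_0,s_1,\ldots,s_{2m-1},[a,b])$ is positive semidefinite, then all $t_i$ are real and lie in $[a,b]$.
   Context: For real numbers $s_0,s_1,\ldots,s_{2m-1}$ and reals $a<b$, define the $m\times m$ matrices $R_m=(s_{i+j-2})_{i,j=1}^m$, $F_m^+(a)=(s_{i+j-1}-a\,s_{i+j-2})_{i,j=1}^m$, $F_m^-(b)=(b\,s_{i+j-2}-s_{i+j-1})_{i,j=1}^m$, and the $3m\times 3m$ block-diagonal matrix $H_m(s_0,\ldots,s_{2m-1},[a,b])=\operatorname{diag}(R_m,F_m^+(a),F_m^-(b))$. *)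

theory Defs
  imports Complex_Main "Jordan_Normal_Form.DL_Rank"
begin

(* Matrices are 0-indexed: entry (i,j) with 0 <= i,j < m corresponds to entry (i+1,j+1) of the paper. *)

definition hankel_R :: "(nat \<Rightarrow> real) \<Rightarrow> nat \<Rightarrow> real mat" where
  "hankel_R s m = mat m m (\<lambda>(i,j). s (i + j))"

definition hankel_Fplus :: "(nat \<Rightarrow> real) \<Rightarrow> real \<Rightarrow> nat \<Rightarrow> real mat" where
  "hankel_Fplus s a m = mat m m (\<lambda>(i,j). s (i + j + 1) - a * s (i + j))"

definition hankel_Fminus :: "(nat \<Rightarrow> real) \<Rightarrow> real \<Rightarrow> nat \<Rightarrow> real mat" where
  "hankel_Fminus s b m = mat m m (\<lambda>(i,j). b * s (i + j) - s (i + j + 1))"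

(* H_m(s_0,...,s_{2m-1},[a,b]) = diag(R_m, F_m^+(a), F_m^-(b)), a 3m x 3m block-diagonal matrix *)
definition block_diag3 :: "real mat \<Rightarrow> real mat \<Rightarrow> real mat \<Rightarrow> real mat" where
  "block_diag3 A B C =
     four_block_mat A (0\<^sub>m (dim_row A) (dim_col B + dim_col C))
                      (0\<^sub>m (dim_row B + dim_row C) (dim_col A))
                      (four_block_mat B (0\<^sub>m (dim_row B) (dim_col C)) (0\<^sub>m (dim_row C) (dim_col B)) C)"

definition hankel_H :: "(nat \<Rightarrow> real) \<Rightarrow> nat \<Rightarrow> real \<Rightarrow> real \<Rightarrow> real mat" where
  "hankel_H s m a b = block_diag3 (hankel_R s m) (hankel_Fplus s a m) (hankel_Fminus s b m)"

definition psd_mat :: "real mat \<Rightarrow> bool" where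
  "psd_mat A \<longleftrightarrow> A \<in> carrier_mat (dim_row A) (dim_row A) \<and> A\<^sup>T = A \<and>
     (\<forall>x \<in> carrier_vec (dim_row A). scalar_prod x (A *\<^sub>v x) \<ge> 0)"

definition mat_rank :: "real mat \<Rightarrow> nat" where
  "mat_rank A = vec_space.rank (dim_row A) A"

end

theory Submission
  imports Defs "Jordan_Normal_Form.DL_Rank_Submatrix"
begin

(* For weights c l at nodes t l consider the moments s_k = Re (\<Sum>l<n. c l * t l ^ k). The
   three blocks of H_m are the Hankel matrices of the moments with weights 1, t l - a and b - t l,
   and at a real coefficient vector x their quadratic forms are Re (\<Sum>l<n. c l * p(t l)^2), where
   p is the polynomial with coefficients x. For real nodes in [a,b] all terms are non-negative.
   Conversely, real power sums make the node set T closed under conjugation, and the leading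
   card T x card T minor of R_n is non-singular (a kernel vector would give \<Sum>l<n. |p(t l)|^2 = 0),
   so card T <= rank R_n <= m. Hence every conjugation-symmetric function on T is some p of degree
   < m (Lagrange interpolation). Taking p = \<i>, -\<i> on a non-real conjugate pair, or the indicator
   of a node outside [a,b], would make one of the quadratic forms negative. *)

lemma lagrange_basis_exists:
  fixes S :: "'a::field set"
  assumes "finite S" "w \<in> S"
  shows "\<exists>L. degree L < card S \<and> (\<forall>v\<in>S. poly L v = (if v = w then 1 else 0))"
proof -
  define L where "L = Polynomial.smult (1 / (\<Prod>u\<in>S-{w}. w - u)) (\<Prod>u\<in>S-{w}. [:-u, 1:])"
  have "degree L \<le> card (S - {w})"
    unfolding L_def using degree_prod_sum_le[of "S - {w}" "\<lambda>u. [:-u, 1:]"] assms(1) by simp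
  also have "\<dots> < card S"
    using assms by (rule card_Diff1_less)
  finally have "degree L < card S" .
  moreover have "poly L v = (if v = w then 1 else 0)" if "v \<in> S" for v
    using assms that by (auto simp: L_def poly_prod prod_zero_iff)
  ultimately show ?thesis by blast
qed

lemma lagrange_interpolation_exists:
  fixes S :: "'a::field set"
  assumes "finite S" "S \<noteq> {}"
  shows "\<exists>P. degree P < card S \<and> (\<forall>u\<in>S. poly P u = f u)"
proof -
  obtain L where L: "\<And>w. w \<in> S \<Longrightarrow> degree (L w) < card S"
    "\<And>w v. w \<in> S \<Longrightarrow> v \<in> S \<Longrightarrow> poly (L w) v = (if v = w then 1 else 0)"
    using lagrange_basis_exists[OF assms(1)] by metis
  define P where "P = (\<Sum>w\<in>S. Polynomial.smult (f w) (L w))"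
  have "degree P < card S"
    unfolding P_def using L(1) assms
    by (intro degree_sum_less) (auto intro: le_less_trans[OF degree_smult_le])
  moreover have "poly P u = f u" if "u \<in> S" for u
    using assms that by (simp add: P_def poly_sum L(2) if_distrib[of "(*) _"] cong: if_cong)
  ultimately show ?thesis by blast
qed

definition poly_of_real_vec :: "real vec \<Rightarrow> complex poly" where
  "poly_of_real_vec x = (\<Sum>j<dim_vec x. monom (complex_of_real (x $ j)) j)"

lemma coeff_poly_of_real_vec:
  "coeff (poly_of_real_vec x) j = (if j < dim_vec x then complex_of_real (x $ j) else 0)"
  by (simp add: poly_of_real_vec_def coeff_sum coeff_monom)

lemma poly_poly_of_real_vec:
  "poly (poly_of_real_vec x) u = (\<Sum>j<dim_vec x. complex_of_real (x $ j) * u ^ j)"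
  by (simp add: poly_of_real_vec_def poly_sum poly_monom)

lemma poly_of_real_vec_eq_0_iff: "poly_of_real_vec x = 0 \<longleftrightarrow> x = 0\<^sub>v (dim_vec x)"
proof
  assume zero: "poly_of_real_vec x = 0"
  have "x $ j = 0" if "j < dim_vec x" for j
    using arg_cong[OF zero, of "\<lambda>p. coeff p j"] that by (simp add: coeff_poly_of_real_vec)
  then show "x = 0\<^sub>v (dim_vec x)"
    by (intro eq_vecI) auto
next
  assume "x = 0\<^sub>v (dim_vec x)"
  then have "x $ j = 0" if "j < dim_vec x" for j
    using that by (metis index_zero_vec(1))
  then show "poly_of_real_vec x = 0"
    by (intro poly_eqI) (simp add: coeff_poly_of_real_vec)
qed

lemma degree_poly_of_real_vec_less:
  assumes "dim_vec x > 0"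
  shows "degree (poly_of_real_vec x) < dim_vec x"
proof -
  have "degree (poly_of_real_vec x) \<le> dim_vec x - 1"
    by (rule degree_le) (auto simp: coeff_poly_of_real_vec)
  then show ?thesis using assms by linarith
qed

lemma real_coeff_interpolation:
  assumes "finite S" "card S \<le> m"
    and cnj_closed: "\<forall>u\<in>S. cnj u \<in> S" and cnj_f: "\<forall>u\<in>S. f (cnj u) = cnj (f u)"
  shows "\<exists>x\<in>carrier_vec m. \<forall>u\<in>S. poly (poly_of_real_vec x) u = f u"
proof (cases "S = {}")
  case True
  then show ?thesis by (auto intro: zero_carrier_vec)
next
  case False
  obtain P where deg: "degree P < card S" and P: "\<forall>u\<in>S. poly P u = f u"
    using lagrange_interpolation_exists[OF assms(1) False] by blast
  define x where "x = vec m (\<lambda>j. Re (coeff P j))"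
  have "poly_of_real_vec x = Polynomial.smult (1/2) (P + map_poly cnj P)"
  proof (rule poly_eqI)
    fix j
    have "coeff P j = 0" if "j \<ge> m" using deg assms(2) that by (intro coeff_eq_0) linarith
    then show "coeff (poly_of_real_vec x) j = coeff (Polynomial.smult (1/2) (P + map_poly cnj P)) j"
      by (auto simp: coeff_poly_of_real_vec x_def coeff_map_poly complex_add_cnj)
  qed
  then have "poly (poly_of_real_vec x) u = f u" if "u \<in> S" for u
    using that P cnj_closed cnj_f by (simp add: poly_cnj[symmetric])
  then show ?thesis unfolding x_def by force
qed

lemma psd_mat_iff:
  assumes "A \<in> carrier_mat n n"
  shows "psd_mat A \<longleftrightarrow> A\<^sup>T = A \<and> (\<forall>x\<in>carrier_vec n. x \<bullet> (A *\<^sub>v x) \<ge> 0)"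
  using assms unfolding psd_mat_def by auto

lemma quadratic_form_four_block_diag:
  assumes A: "A \<in> carrier_mat k k" and D: "D \<in> carrier_mat l l"
    and x: "x \<in> carrier_vec k" and y: "y \<in> carrier_vec l"
  shows "(x @\<^sub>v y) \<bullet> (four_block_mat A (0\<^sub>m k l) (0\<^sub>m l k) D *\<^sub>v (x @\<^sub>v y))
    = x \<bullet> (A *\<^sub>v x) + y \<bullet> (D *\<^sub>v y)"
  using assms by (simp add: mult_mat_vec_split scalar_prod_append[of _ k _ l])

lemma transpose_four_block_diag_eq_iff:
  assumes A: "A \<in> carrier_mat k k" and D: "D \<in> carrier_mat l l"
  shows "(four_block_mat A (0\<^sub>m k l) (0\<^sub>m l k) D)\<^sup>T = four_block_mat A (0\<^sub>m k l) (0\<^sub>m l k) D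
    \<longleftrightarrow> A\<^sup>T = A \<and> D\<^sup>T = D" (is "?M\<^sup>T = ?M \<longleftrightarrow> _")
proof
  assume sym: "?M\<^sup>T = ?M"
  have entry: "?M $$ (j, i) = ?M $$ (i, j)" if "i < k + l" "j < k + l" for i j
    using arg_cong[OF sym, of "\<lambda>M. M $$ (i, j)"] that A D by simp
  show "A\<^sup>T = A \<and> D\<^sup>T = D"
  proof
    have "A $$ (j, i) = A $$ (i, j)" if "i < k" "j < k" for i j
      using entry[of i j] that A D by simp
    then show "A\<^sup>T = A"
      using A by (intro eq_matI) auto
    have "D $$ (j, i) = D $$ (i, j)" if "i < l" "j < l" for i j
      using entry[of "k + i" "k + j"] that A D by simp
    then show "D\<^sup>T = D"
      using D by (intro eq_matI) auto
  qed
next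
  assume "A\<^sup>T = A \<and> D\<^sup>T = D"
  then show "?M\<^sup>T = ?M"
    using A D by (simp add: transpose_four_block_mat[OF A _ _ D])
qed

lemma psd_four_block_diag_iff:
  assumes A: "A \<in> carrier_mat k k" and D: "D \<in> carrier_mat l l"
  shows "psd_mat (four_block_mat A (0\<^sub>m k l) (0\<^sub>m l k) D) \<longleftrightarrow> psd_mat A \<and> psd_mat D"
proof -
  let ?M = "four_block_mat A (0\<^sub>m k l) (0\<^sub>m l k) D"
  have M: "?M \<in> carrier_mat (k + l) (k + l)"
    using A D by simp
  have split: "(\<forall>v\<in>carrier_vec (k + l). P v) \<longleftrightarrow> (\<forall>x\<in>carrier_vec k. \<forall>y\<in>carrier_vec l. P (x @\<^sub>v y))"
    for P :: "real vec \<Rightarrow> bool"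
    by (metis append_carrier_vec vec_first_carrier vec_last_carrier vec_first_last_append)
  have "(\<forall>x\<in>carrier_vec k. \<forall>y\<in>carrier_vec l. x \<bullet> (A *\<^sub>v x) + y \<bullet> (D *\<^sub>v y) \<ge> 0)
    \<longleftrightarrow> (\<forall>x\<in>carrier_vec k. x \<bullet> (A *\<^sub>v x) \<ge> 0) \<and> (\<forall>y\<in>carrier_vec l. y \<bullet> (D *\<^sub>v y) \<ge> 0)"
  proof (intro iffI conjI ballI)
    fix x :: "real vec" assume all: "\<forall>x\<in>carrier_vec k. \<forall>y\<in>carrier_vec l. x \<bullet> (A *\<^sub>v x) + y \<bullet> (D *\<^sub>v y) \<ge> 0"
      and x: "x \<in> carrier_vec k"
    show "x \<bullet> (A *\<^sub>v x) \<ge> 0"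
      using all[rule_format, OF x zero_carrier_vec] D by simp
  next
    fix y :: "real vec" assume all: "\<forall>x\<in>carrier_vec k. \<forall>y\<in>carrier_vec l. x \<bullet> (A *\<^sub>v x) + y \<bullet> (D *\<^sub>v y) \<ge> 0"
      and y: "y \<in> carrier_vec l"
    show "y \<bullet> (D *\<^sub>v y) \<ge> 0"
      using all[rule_format, OF zero_carrier_vec y] A by simp
  qed simp
  then show ?thesis
    using A D M unfolding psd_mat_def
    by (simp add: split quadratic_form_four_block_diag transpose_four_block_diag_eq_iff conj_ac)
qed

lemma psd_block_diag3_iff:
  assumes "A \<in> carrier_mat k k" "B \<in> carrier_mat l l" "C \<in> carrier_mat p p"
  shows "psd_mat (block_diag3 A B C) \<longleftrightarrow> psd_mat A \<and> psd_mat B \<and> psd_mat C"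
proof -
  have "four_block_mat B (0\<^sub>m l p) (0\<^sub>m p l) C \<in> carrier_mat (l + p) (l + p)"
    using assms by simp
  then show ?thesis
    using assms unfolding block_diag3_def by (simp add: psd_four_block_diag_iff)
qed

definition moment_seq :: "(nat \<Rightarrow> complex) \<Rightarrow> (nat \<Rightarrow> complex) \<Rightarrow> nat \<Rightarrow> nat \<Rightarrow> real" where
  "moment_seq c t n k = Re (\<Sum>l<n. c l * t l ^ k)"

lemma hankel_R_carrier: "hankel_R s m \<in> carrier_mat m m"
  by (simp add: hankel_R_def)

lemma transpose_hankel_R: "(hankel_R s m)\<^sup>T = hankel_R s m"
  by (rule eq_matI) (auto simp: hankel_R_def add.commute)

lemma bilinear_form_hankel_moments:
  assumes x: "x \<in> carrier_vec m" and y: "y \<in> carrier_vec m"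
  shows "y \<bullet> (hankel_R (moment_seq c t n) m *\<^sub>v x)
    = Re (\<Sum>l<n. c l * poly (poly_of_real_vec y) (t l) * poly (poly_of_real_vec x) (t l))"
proof -
  have "y \<bullet> (hankel_R (moment_seq c t n) m *\<^sub>v x)
      = (\<Sum>i<m. \<Sum>j<m. y $ i * x $ j * moment_seq c t n (i + j))"
    using x y unfolding scalar_prod_def mult_mat_vec_def hankel_R_def
    by (auto simp: lessThan_atLeast0 sum_distrib_left mult_ac intro!: sum.cong)
  also have "\<dots> = (\<Sum>i<m. \<Sum>j<m. Re (complex_of_real (y $ i) * complex_of_real (x $ j)
      * (\<Sum>l<n. c l * t l ^ (i + j))))"
    by (intro sum.cong refl) (simp add: moment_seq_def)
  also have "\<dots> = Re (\<Sum>i<m. \<Sum>j<m. complex_of_real (y $ i) * complex_of_real (x $ j)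
      * (\<Sum>l<n. c l * t l ^ (i + j)))"
    by simp
  also have "(\<Sum>i<m. \<Sum>j<m. complex_of_real (y $ i) * complex_of_real (x $ j)
      * (\<Sum>l<n. c l * t l ^ (i + j)))
    = (\<Sum>l<n. c l * poly (poly_of_real_vec y) (t l) * poly (poly_of_real_vec x) (t l))"
    using x y
    by (simp add: poly_poly_of_real_vec sum_distrib_left sum_distrib_right power_add mult_ac
        sum.swap[of _ "{..<n}"])
  finally show ?thesis .
qed

lemma power_sums_eq_moment_seq: "(\<lambda>k. Re (\<Sum>l<n. t l ^ k)) = moment_seq (\<lambda>_. 1) t n"
  by (rule ext) (simp add: moment_seq_def)

lemma hankel_Fplus_moments:
  "hankel_Fplus (moment_seq (\<lambda>_. 1) t n) a m = hankel_R (moment_seq (\<lambda>l. t l - of_real a) t n) m"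
  by (rule eq_matI)
    (simp_all add: hankel_Fplus_def hankel_R_def moment_seq_def left_diff_distrib sum_subtractf
      sum_distrib_left mult.assoc)

lemma hankel_Fminus_moments:
  "hankel_Fminus (moment_seq (\<lambda>_. 1) t n) b m = hankel_R (moment_seq (\<lambda>l. of_real b - t l) t n) m"
  by (rule eq_matI)
    (simp_all add: hankel_Fminus_def hankel_R_def moment_seq_def left_diff_distrib sum_subtractf
      sum_distrib_left mult.assoc)

lemma psd_hankel_H_power_sums_iff:
  "psd_mat (hankel_H (\<lambda>k. Re (\<Sum>l<n. t l ^ k)) m a b) \<longleftrightarrow>
     psd_mat (hankel_R (moment_seq (\<lambda>_. 1) t n) m) \<and>
     psd_mat (hankel_R (moment_seq (\<lambda>l. t l - of_real a) t n) m) \<and>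
     psd_mat (hankel_R (moment_seq (\<lambda>l. of_real b - t l) t n) m)"
  unfolding hankel_H_def power_sums_eq_moment_seq hankel_Fplus_moments hankel_Fminus_moments
  by (rule psd_block_diag3_iff) (rule hankel_R_carrier)+

lemma psd_hankel_moments_real:
  assumes "\<forall>l<n. t l \<in> \<real> \<and> c l \<in> \<real> \<and> Re (c l) \<ge> 0"
  shows "psd_mat (hankel_R (moment_seq c t n) m)"
proof -
  have "x \<bullet> (hankel_R (moment_seq c t n) m *\<^sub>v x) \<ge> 0" if x: "x \<in> carrier_vec m" for x
  proof -
    let ?p = "\<lambda>l. poly (poly_of_real_vec x) (t l)"
    have term_nonneg: "Re (c l * ?p l * ?p l) \<ge> 0" if "l < n" for l
    proof -
      have "?p l \<in> \<real>"
        using assms that by (auto simp: poly_poly_of_real_vec)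
      then show ?thesis
        using assms that by (auto elim!: Reals_cases simp: mult.assoc intro!: mult_nonneg_nonneg)
    qed
    show ?thesis
      unfolding bilinear_form_hankel_moments[OF x x] Re_sum by (intro sum_nonneg term_nonneg) simp
  qed
  then show ?thesis
    unfolding psd_mat_iff[OF hankel_R_carrier] by (simp add: transpose_hankel_R)
qed

lemma sum_lessThan_if_eq_card:
  "(\<Sum>l<(n::nat). if P l then z else 0) = of_nat (card {l. l < n \<and> P l}) * (z::'a::semiring_1)"
  by (subst sum.inter_filter[symmetric]) auto

lemma sum_poly_cnj_nodes_eq:
  fixes t :: "nat \<Rightarrow> complex"
  assumes real: "\<forall>k. (\<Sum>l<n. t l ^ k) \<in> \<real>"
  shows "(\<Sum>l<n. poly p (cnj (t l))) = (\<Sum>l<n. poly p (t l))"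
proof -
  have sum_poly: "(\<Sum>l<n. poly p (u l)) = (\<Sum>i\<le>degree p. coeff p i * (\<Sum>l<n. u l ^ i))" for u
    by (simp add: poly_altdef sum_distrib_left sum.swap[of _ "{..<n}"])
  have "(\<Sum>l<n. cnj (t l) ^ i) = (\<Sum>l<n. t l ^ i)" for i
  proof -
    have "(\<Sum>l<n. cnj (t l) ^ i) = cnj (\<Sum>l<n. t l ^ i)"
      by simp
    also have "\<dots> = (\<Sum>l<n. t l ^ i)"
      using real Reals_cnj_iff by blast
    finally show ?thesis .
  qed
  then show ?thesis
    unfolding sum_poly by simp
qed

lemma power_sums_real_imp_cnj_closed:
  fixes t :: "nat \<Rightarrow> complex"
  assumes real: "\<forall>k. (\<Sum>l<n. t l ^ k) \<in> \<real>"
  shows "\<forall>u\<in>t ` {..<n}. cnj u \<in> t ` {..<n}"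
proof (rule ccontr)
  assume "\<not> ?thesis"
  then obtain l0 where l0: "l0 < n" and not_node: "cnj (t l0) \<notin> t ` {..<n}"
    by blast
  define S where "S = t ` {..<n} \<union> cnj ` t ` {..<n}"
  have "finite S" "S \<noteq> {}"
    using l0 by (auto simp: S_def)
  then obtain P where P: "\<forall>v\<in>S. poly P v = (if v = cnj (t l0) then 1 else 0)"
    using lagrange_interpolation_exists[of S "\<lambda>v. if v = cnj (t l0) then 1 else 0"] by blast
  have "of_nat (card {l. l < n \<and> t l = t l0}) = (\<Sum>l<n. if t l = t l0 then 1 else (0::complex))"
    by (simp add: sum_lessThan_if_eq_card)
  also have "\<dots> = (\<Sum>l<n. poly P (cnj (t l)))"
    using P by (intro sum.cong) (auto simp: S_def)
  also have "\<dots> = (\<Sum>l<n. poly P (t l))"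
    by (rule sum_poly_cnj_nodes_eq[OF real])
  also have "\<dots> = 0"
    using P not_node by (intro sum.neutral) (force simp: S_def)
  finally have "card {l. l < n \<and> t l = t l0} = 0"
    by simp
  then show False
    using l0 by auto
qed

lemma submatrix_hankel_R:
  assumes "r \<le> n"
  shows "submatrix (hankel_R s n) {..<r} {..<r} = hankel_R s r"
proof -
  have "{i. i < n \<and> i < r} = {..<r}"
    using assms by auto
  then have card: "card {i. i < n \<and> i < r} = r"
    by simp
  have pick: "pick {..<r} i = i" if "i < r" for i
  proof -
    have "{a \<in> {..<r}. a < i} = {..<i}"
      using that by auto
    then show ?thesis
      using pick_card_in_set[of i "{..<r}"] that by simp
  qed
  have "submatrix (hankel_R s n) {..<r} {..<r} $$ (i, j) = s (i + j)" if "i < r" "j < r" for i j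
    using submatrix_index[of i "hankel_R s n" "{..<r}" j "{..<r}"] that card pick assms
    by (simp add: hankel_R_def)
  then show ?thesis
    by (intro eq_matI) (auto simp: dim_submatrix card hankel_R_def)
qed

lemma hankel_power_sums_kernel_trivial:
  fixes t :: "nat \<Rightarrow> complex" and n :: nat
  defines "r \<equiv> card (t ` {..<n})"
  assumes cnj_closed: "\<forall>u\<in>t ` {..<n}. cnj u \<in> t ` {..<n}"
    and x: "x \<in> carrier_vec r"
    and kernel: "hankel_R (moment_seq (\<lambda>_. 1) t n) r *\<^sub>v x = 0\<^sub>v r"
  shows "x = 0\<^sub>v r"
proof -
  define p where "p = poly_of_real_vec x"
  have p_cnj: "poly p (cnj u) = cnj (poly p u)" for u
    by (simp add: p_def poly_poly_of_real_vec)
  obtain y where y: "y \<in> carrier_vec r"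
    and y_interp: "\<forall>u\<in>t ` {..<n}. poly (poly_of_real_vec y) u = cnj (poly p u)"
    using real_coeff_interpolation[of "t ` {..<n}" r "\<lambda>u. cnj (poly p u)"] cnj_closed p_cnj
    by (auto simp: r_def)
  have "0 = y \<bullet> (hankel_R (moment_seq (\<lambda>_. 1) t n) r *\<^sub>v x)"
    using kernel y by simp
  also have "\<dots> = Re (\<Sum>l<n. cnj (poly p (t l)) * poly p (t l))"
    using y_interp by (simp add: bilinear_form_hankel_moments[OF x y] p_def)
  also have "\<dots> = (\<Sum>l<n. (cmod (poly p (t l)))\<^sup>2)"
    unfolding Re_sum by (intro sum.cong refl) (metis Re_complex_of_real complex_norm_square mult.commute)
  finally have "\<forall>u\<in>t ` {..<n}. poly p u = 0"
    by (simp add: sum_nonneg_eq_0_iff)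
  then have "p = 0"
  proof (cases "r = 0")
    case True
    then show ?thesis
      using x by (auto simp: p_def poly_of_real_vec_eq_0_iff)
  next
    case False
    show ?thesis
    proof (rule poly_eqI_degree[of "t ` {..<n}"])
      show "degree p < card (t ` {..<n})"
        using degree_poly_of_real_vec_less[of x] x False by (simp add: p_def r_def card_gt_0_iff)
    qed (use False \<open>\<forall>u\<in>t ` {..<n}. poly p u = 0\<close> in \<open>auto simp: r_def\<close>)
  qed
  then show ?thesis
    using x by (simp add: p_def poly_of_real_vec_eq_0_iff)
qed

lemma card_nodes_le_rank_hankel_power_sums:
  fixes t :: "nat \<Rightarrow> complex"
  assumes cnj_closed: "\<forall>u\<in>t ` {..<n}. cnj u \<in> t ` {..<n}"
  shows "card (t ` {..<n}) \<le> mat_rank (hankel_R (moment_seq (\<lambda>_. 1) t n) n)"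
proof -
  let ?r = "card (t ` {..<n})" and ?s = "moment_seq (\<lambda>_. 1) t n"
  have r_le: "?r \<le> n"
    using card_image_le[of "{..<n}" t] by simp
  have "det (hankel_R ?s ?r) \<noteq> 0"
    using det_0_iff_vec_prod_zero_field[OF hankel_R_carrier]
      hankel_power_sums_kernel_trivial[OF cnj_closed] by blast
  then have "card {j. j < n \<and> j \<in> {..<?r}} \<le> vec_space.rank n (hankel_R ?s n)"
    using vec_space.rank_gt_minor[OF hankel_R_carrier] submatrix_hankel_R[OF r_le] by metis
  moreover have "card {j. j < n \<and> j \<in> {..<?r}} = ?r"
  proof -
    have "{j. j < n \<and> j \<in> {..<?r}} = {..<?r}"
      using r_le by auto
    then show ?thesis
      by simp
  qed
  moreover have "mat_rank (hankel_R ?s n) = vec_space.rank n (hankel_R ?s n)"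
    unfolding mat_rank_def using carrier_matD(1)[OF hankel_R_carrier] by metis
  ultimately show ?thesis
    by linarith
qed

lemma psd_hankel_moments_interpolant_nonneg:
  fixes t :: "nat \<Rightarrow> complex"
  assumes cnj_closed: "\<forall>u\<in>t ` {..<n}. cnj u \<in> t ` {..<n}" and card: "card (t ` {..<n}) \<le> m"
    and psd: "psd_mat (hankel_R (moment_seq c t n) m)"
    and cnj_f: "\<forall>u\<in>t ` {..<n}. f (cnj u) = cnj (f u)"
  shows "Re (\<Sum>l<n. c l * f (t l) * f (t l)) \<ge> 0"
proof -
  obtain x where x: "x \<in> carrier_vec m" and x_interp: "\<forall>u\<in>t ` {..<n}. poly (poly_of_real_vec x) u = f u"
    using real_coeff_interpolation[OF _ card cnj_closed cnj_f] by blast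
  have "0 \<le> x \<bullet> (hankel_R (moment_seq c t n) m *\<^sub>v x)"
    using psd x unfolding psd_mat_iff[OF hankel_R_carrier] by blast
  also have "\<dots> = Re (\<Sum>l<n. c l * f (t l) * f (t l))"
    using x_interp by (simp add: bilinear_form_hankel_moments[OF x x])
  finally show ?thesis .
qed

lemma nodes_real_if_psd_hankel_power_sums:
  fixes t :: "nat \<Rightarrow> complex"
  assumes cnj_closed: "\<forall>u\<in>t ` {..<n}. cnj u \<in> t ` {..<n}" and card: "card (t ` {..<n}) \<le> m"
    and psd: "psd_mat (hankel_R (moment_seq (\<lambda>_. 1) t n) m)"
    and l0: "l0 < n"
  shows "t l0 \<in> \<real>"
proof (rule ccontr)
  assume "t l0 \<notin> \<real>"
  then have not_self_cnj: "cnj (t l0) \<noteq> t l0"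
    using Reals_cnj_iff by blast
  define f where "f u = (if u = t l0 then \<i> else if u = cnj (t l0) then - \<i> else 0)" for u
  have "cnj u = w \<longleftrightarrow> u = cnj w" for u w :: complex
    by auto
  then have "\<forall>u\<in>t ` {..<n}. f (cnj u) = cnj (f u)"
    using not_self_cnj by (auto simp: f_def)
  then have "0 \<le> Re (\<Sum>l<n. 1 * f (t l) * f (t l))"
    by (rule psd_hankel_moments_interpolant_nonneg[OF cnj_closed card psd])
  also have "\<dots> = (\<Sum>l<n. if t l = t l0 \<or> t l = cnj (t l0) then -1 else 0)"
    unfolding Re_sum using not_self_cnj by (intro sum.cong refl) (simp add: f_def)
  also have "\<dots> = - real (card {l. l < n \<and> (t l = t l0 \<or> t l = cnj (t l0))})"
    by (simp add: sum_lessThan_if_eq_card)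
  finally have "card {l. l < n \<and> (t l = t l0 \<or> t l = cnj (t l0))} = 0"
    by simp
  then show False
    using l0 by auto
qed

lemma weight_nonneg_if_psd_hankel_moments:
  fixes t :: "nat \<Rightarrow> complex"
  assumes real: "\<forall>l<n. t l \<in> \<real>" and card: "card (t ` {..<n}) \<le> m"
    and psd: "psd_mat (hankel_R (moment_seq (\<lambda>l. g (t l)) t n) m)"
    and l0: "l0 < n"
  shows "Re (g (t l0)) \<ge> 0"
proof -
  have self_cnj: "\<forall>u\<in>t ` {..<n}. cnj u = u"
    using real Reals_cnj_iff by blast
  define f where "f u = (if u = t l0 then 1 else 0 :: complex)" for u
  have "0 \<le> Re (\<Sum>l<n. g (t l) * f (t l) * f (t l))"
    using self_cnj by (intro psd_hankel_moments_interpolant_nonneg[OF _ card psd]) (auto simp: f_def)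
  also have "\<dots> = real (card {l. l < n \<and> t l = t l0}) * Re (g (t l0))"
    by (simp add: f_def sum_lessThan_if_eq_card[symmetric] if_distrib cong: if_cong)
  finally have "0 \<le> real (card {l. l < n \<and> t l = t l0}) * Re (g (t l0))" .
  moreover have "card {l. l < n \<and> t l = t l0} > 0"
    using l0 by (auto simp: card_gt_0_iff)
  ultimately show ?thesis
    by (metis mult_zero_right mult_le_cancel_left_pos of_nat_0_less_iff)
qed

theorem theorem3p2:
  fixes a b :: real and n :: nat
  assumes "a < b"
  shows
    "(\<forall>t :: nat \<Rightarrow> real. (\<forall>i<n. t i \<in> {a..b}) \<longrightarrow>
        (\<forall>m::nat. m \<ge> 1 \<longrightarrow> psd_mat (hankel_H (\<lambda>k. \<Sum>i<n. t i ^ k) m a b)))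
     \<and>
     (\<forall>(t :: nat \<Rightarrow> complex) (m::nat).
        (\<forall>k. (\<Sum>i<n. t i ^ k) \<in> \<real>) \<longrightarrow>
        m \<ge> mat_rank (hankel_R (\<lambda>k. Re (\<Sum>i<n. t i ^ k)) n) \<longrightarrow>
        psd_mat (hankel_H (\<lambda>k. Re (\<Sum>i<n. t i ^ k)) m a b) \<longrightarrow>
        (\<forall>i<n. t i \<in> \<real> \<and> Re (t i) \<in> {a..b}))"
proof (rule conjI; intro allI impI)
  fix t :: "nat \<Rightarrow> real" and m :: nat
  assume t: "\<forall>i<n. t i \<in> {a..b}"
  define tc where "tc i = complex_of_real (t i)" for i
  have power_sums: "(\<lambda>k. \<Sum>i<n. t i ^ k) = (\<lambda>k. Re (\<Sum>i<n. tc i ^ k))"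
    by (simp add: tc_def)
  have psd: "psd_mat (hankel_R (moment_seq c tc n) m)"
    if "c \<in> {\<lambda>_. 1, \<lambda>l. tc l - of_real a, \<lambda>l. of_real b - tc l}" for c
    using that t by (intro psd_hankel_moments_real) (auto simp: tc_def)
  show "psd_mat (hankel_H (\<lambda>k. \<Sum>i<n. t i ^ k) m a b)"
    unfolding power_sums psd_hankel_H_power_sums_iff by (intro conjI psd) auto
next
  fix t :: "nat \<Rightarrow> complex" and m i :: nat
  assume real: "\<forall>k. (\<Sum>i<n. t i ^ k) \<in> \<real>"
    and rank: "mat_rank (hankel_R (\<lambda>k. Re (\<Sum>i<n. t i ^ k)) n) \<le> m"
    and psd: "psd_mat (hankel_H (\<lambda>k. Re (\<Sum>i<n. t i ^ k)) m a b)"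
    and i: "i < n"
  have cnj_closed: "\<forall>u\<in>t ` {..<n}. cnj u \<in> t ` {..<n}"
    using power_sums_real_imp_cnj_closed[OF real] .
  have card: "card (t ` {..<n}) \<le> m"
    using card_nodes_le_rank_hankel_power_sums[OF cnj_closed] rank
    unfolding power_sums_eq_moment_seq by linarith
  have nodes_real: "\<forall>l<n. t l \<in> \<real>"
    using psd nodes_real_if_psd_hankel_power_sums[OF cnj_closed card]
    unfolding psd_hankel_H_power_sums_iff by blast
  have "Re (t i - of_real a) \<ge> 0" "Re (of_real b - t i) \<ge> 0"
    using psd i weight_nonneg_if_psd_hankel_moments[OF nodes_real card, of "\<lambda>u. u - of_real a"]
      weight_nonneg_if_psd_hankel_moments[OF nodes_real card, of "\<lambda>u. of_real b - u"]
    unfolding psd_hankel_H_power_sums_iff by blast+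
  then show "t i \<in> \<real> \<and> Re (t i) \<in> {a..b}"
    using nodes_real i by simp
qed

end
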